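(* Let $\mathbb{F}$ be a subfield of $\mathbb{R}$ and let $\vec v_1,\vec v_2,\vec v_3$ be an orthogonal basis of $\mathbb{F}^3$. Put $V_j:=\mathbb{F}\vec v_j\in\mathbb{P}^2(\mathbb{F})$, $V_{12}:=\mathbb{F}(\vec v_1-\vec v_2)$, $V_{23}:=\mathbb{F}(\vec v_2-\vec v_3)$, $V_{13}:=\mathbb{F}(\vec v_1-\vec v_3)$. Then $V_1\times V_2=V_3$, $V_2\times V_3=V_1$, $V_3\times V_1=V_2$, and for all $r,s\in\mathbb{F}$: \begin{enumerate} \item[a)] $\mathbb{F}(\vec v_1-rs\vec v_2)=V_3\times\big[\mathbb{F}(\vec v_3-r\vec v_2)\times\mathbb{F}(\vec v_1-s\vec v_3)\big]$; \item[b)] $\mathbb{F}(\vec v_1-s\vec v_3)=V_2\times\big[V_{23}\times\mathbb{F}(\vec v_1-s\vec v_2)\big]$; \item[c)] $\mathbb{F}(\vec v_3-r\vec v_2)=V_1\times\big[V_{13}\times\mathbb{F}(\vec v_1-r\vec v_2)\big]$; \item[d)] $\mathbb{F}(\vec v_1-(r-s)\vec v_2)=V_3\times\Big[\big([V_{23}\times\mathbb{F}(\vec v_1-r\vec v_2)]\times[V_2\times\mathbb{F}(\vec v_1-s\vec v_3)]\big)\times V_3\Big]$; \item[e)] $V_{13}=V_2\times(V_{12}\times V_{23})$; \item[f)] for $W\in\mathbb{P}^2(\mathbb{F})$, the expression $\imath(W):=(W\times V_3)\times\Big(\big((W\times V_3)\times V_3\big)\times V_2\Big)$ is defined precisely when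 $W=\mathbb{F}(\vec v_1-r\vec v_2+s\vec v_3)$ for some $s\in\mathbb{F}$ and a unique $r\in\mathbb{F}$, and in this case $\imath(W)=\mathbb{F}(\vec v_1-r\vec v_2)$. Moreover, if $W=\mathbb{F}(\vec v_1-r\vec v_2)$ then $\imath(W)=W$. \end{enumerate}
   Context: $\mathbb{P}^2(\mathbb{F})=\{\mathbb{F}\vec v:\vec 0\ne\vec v\in\mathbb{F}^3\}$ with $\mathbb{F}\vec v=\{\lambda\vec v:\lambda\in\mathbb{F}\}$. For distinct $\mathbb{F}\vec v,\mathbb{F}\vec w\in\mathbb{P}^2(\mathbb{F})$ the projective cross product is $\mathbb{F}\vec v\times\mathbb{F}\vec w:=\mathbb{F}(\vec v\times\vec w)$, where $\times$ is the usual cross product on $\mathbb{F}^3$; $\mathbb{F}\vec v\times\mathbb{F}\vec v$ is undefined, and an expression built from it is defined only if all its subexpressions are defined. All equalities in the claim are equalities of (defined) elements of $\mathbb{P}^2(\mathbb{F})$. *)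

theory Defs
  imports "HOL-Analysis.Analysis"
begin

definition is_subfield_of_real :: "real set \<Rightarrow> bool" where
  "is_subfield_of_real F \<longleftrightarrow> 0 \<in> F \<and> 1 \<in> F \<and>
     (\<forall>x\<in>F. \<forall>y\<in>F. x + y \<in> F \<and> x * y \<in> F) \<and>
     (\<forall>x\<in>F. - x \<in> F) \<and> (\<forall>x\<in>F. x \<noteq> 0 \<longrightarrow> inverse x \<in> F)"

definition Fvec :: "real set \<Rightarrow> (real^3) set" where
  "Fvec F = {v. \<forall>i. v $ i \<in> F}"

definition pline :: "real set \<Rightarrow> real^3 \<Rightarrow> (real^3) set" where
  "pline F v = {c *\<^sub>R v | c. c \<in> F}"

definition P2 :: "real set \<Rightarrow> (real^3) set set" where
  "P2 F = {pline F v | v. v \<in> Fvec F \<and> v \<noteq> 0}"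

definition orth_basis :: "real set \<Rightarrow> real^3 \<Rightarrow> real^3 \<Rightarrow> real^3 \<Rightarrow> bool" where
  "orth_basis F v1 v2 v3 \<longleftrightarrow> v1 \<in> Fvec F \<and> v2 \<in> Fvec F \<and> v3 \<in> Fvec F \<and>
     (\<forall>x\<in>Fvec F. \<exists>!abc. fst abc \<in> F \<and> fst (snd abc) \<in> F \<and> snd (snd abc) \<in> F \<and>
        x = fst abc *\<^sub>R v1 + fst (snd abc) *\<^sub>R v2 + snd (snd abc) *\<^sub>R v3) \<and>
     inner v1 v2 = 0 \<and> inner v2 v3 = 0 \<and> inner v1 v3 = 0"

text \<open>Projective cross product of two points; undefined (None) unless both are
  points of P^2(F) and distinct.  F v x F w := F (v x w) for representatives v, w.\<close>
definition proj_cross :: "real set \<Rightarrow> (real^3) set \<Rightarrow> (real^3) set \<Rightarrow> (real^3) set option" where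
  "proj_cross F A B =
     (if A \<in> P2 F \<and> B \<in> P2 F \<and> A \<noteq> B
      then Some (pline F (cross3 (SOME v. v \<in> Fvec F \<and> v \<noteq> 0 \<and> A = pline F v)
                                 (SOME w. w \<in> Fvec F \<and> w \<noteq> 0 \<and> B = pline F w)))
      else None)"

definition pc :: "real set \<Rightarrow> (real^3) set option \<Rightarrow> (real^3) set option \<Rightarrow> (real^3) set option" where
  "pc F X Y = (case (X, Y) of (Some A, Some B) \<Rightarrow> proj_cross F A B | _ \<Rightarrow> None)"

end

(*
  Write vectors of F^3 in coordinates with respect to the orthogonal basis v1, v2, v3.  The
  cross products of the basis vectors are v2 \<times> v3 = k1 v1, v3 \<times> v1 = k2 v2, v1 \<times> v2 = k3 v3
  with nonzero k_i = [v1 v2 v3] / |v_i|^2 in F, so the cross product acts on coordinates as the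
  standard cross product followed by the diagonal rescaling (k1, k2, k3).  Since F-multiples of a
  vector span the same projective point, the projective cross product can be evaluated on any
  representatives; every identity then becomes a coordinate computation whose two sides differ
  by a nonzero scalar, a monomial in the k_i.  For the map iota, W = F (a v1 + b v2 + c v3) gives
  iota(W) = F (a v1 + b v2) when a \<noteq> 0, while for a = 0 one of the intermediate cross products
  has equal arguments.
*)

theory Submission
  imports Defs
begin

unbundle cross3_syntax

locale subfield_of_real =
  fixes F :: "real set"
  assumes subfield: "is_subfield_of_real F"
begin

lemma zero_mem: "0 \<in> F" and one_mem: "1 \<in> F"
  and add_mem: "x \<in> F \<Longrightarrow> y \<in> F \<Longrightarrow> x + y \<in> F"
  and mult_mem: "x \<in> F \<Longrightarrow> y \<in> F \<Longrightarrow> x * y \<in> F"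
  and uminus_mem: "x \<in> F \<Longrightarrow> - x \<in> F"
  and inverse_mem: "x \<in> F \<Longrightarrow> inverse x \<in> F"
  using subfield unfolding is_subfield_of_real_def by (auto simp del: inverse_eq_divide)

lemma diff_mem: "x \<in> F \<Longrightarrow> y \<in> F \<Longrightarrow> x - y \<in> F"
  using add_mem[of x "- y"] uminus_mem[of y] by simp

lemma divide_mem: "x \<in> F \<Longrightarrow> y \<in> F \<Longrightarrow> x / y \<in> F"
  using mult_mem[of x "inverse y"] inverse_mem[of y] by (simp add: divide_inverse)

lemmas field_mems = zero_mem one_mem add_mem mult_mem uminus_mem diff_mem divide_mem

lemma cross3_mem_Fvec: "x \<in> Fvec F \<Longrightarrow> y \<in> Fvec F \<Longrightarrow> x \<times> y \<in> Fvec F"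
  unfolding Fvec_def by (auto simp: cross3_def vector_def forall_3 intro!: field_mems)

lemma pline_eq_imp_scaleR: "pline F x = pline F y \<Longrightarrow> \<exists>t. x = t *\<^sub>R y"
proof -
  assume "pline F x = pline F y"
  moreover have "x \<in> pline F x" using one_mem unfolding pline_def by force
  ultimately show ?thesis unfolding pline_def by auto
qed

lemma scaleR_factor_mem:
  assumes "x \<in> Fvec F" "y \<in> Fvec F" "y \<noteq> 0" "x = t *\<^sub>R y"
  shows "t \<in> F"
proof -
  obtain i where i: "y $ i \<noteq> 0" using assms(3) by (metis vec_eq_iff zero_index)
  then have "t = x $ i / y $ i" using assms(4) by simp
  then show ?thesis using assms(1,2) divide_mem unfolding Fvec_def by auto
qed

lemma pline_scaleR: assumes "t \<in> F" "t \<noteq> 0" shows "pline F (t *\<^sub>R y) = pline F y"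
proof
  show "pline F (t *\<^sub>R y) \<subseteq> pline F y"
    unfolding pline_def using assms mult_mem by force
  show "pline F y \<subseteq> pline F (t *\<^sub>R y)"
  proof
    fix z assume "z \<in> pline F y"
    then obtain c where "c \<in> F" "z = (c / t) *\<^sub>R (t *\<^sub>R y)"
      unfolding pline_def using assms(2) by auto
    then show "z \<in> pline F (t *\<^sub>R y)"
      unfolding pline_def using divide_mem assms(1) by blast
  qed
qed

lemma representative_eq_scaleR:
  assumes "x \<in> Fvec F" "x \<noteq> 0"
  obtains t where "t \<in> F" "t \<noteq> 0"
    "(SOME v. v \<in> Fvec F \<and> v \<noteq> 0 \<and> pline F x = pline F v) = t *\<^sub>R x"
proof -
  let ?v = "SOME v. v \<in> Fvec F \<and> v \<noteq> 0 \<and> pline F x = pline F v"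
  have v: "?v \<in> Fvec F" "?v \<noteq> 0" "pline F x = pline F ?v"
    using someI[of "\<lambda>v. v \<in> Fvec F \<and> v \<noteq> 0 \<and> pline F x = pline F v" x] assms by auto
  then obtain t where t: "?v = t *\<^sub>R x" using pline_eq_imp_scaleR by blast
  with v assms have "t \<in> F" "t \<noteq> 0" using scaleR_factor_mem by auto
  with t show thesis using that by blast
qed

lemma pc_pline:
  assumes "x \<in> Fvec F" "y \<in> Fvec F" "x \<times> y \<noteq> 0"
  shows "pc F (Some (pline F x)) (Some (pline F y)) = Some (pline F (x \<times> y))"
proof -
  have nz: "x \<noteq> 0" "y \<noteq> 0" using assms(3) by auto
  have P2: "pline F x \<in> P2 F" "pline F y \<in> P2 F" using assms nz unfolding P2_def by auto
  have "pline F x \<noteq> pline F y"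
  proof
    assume "pline F x = pline F y"
    then obtain t where "x = t *\<^sub>R y" using pline_eq_imp_scaleR by blast
    then show False using assms(3) by (simp add: cross_mult_left)
  qed
  moreover obtain s where s: "s \<in> F" "s \<noteq> 0"
    "(SOME v. v \<in> Fvec F \<and> v \<noteq> 0 \<and> pline F x = pline F v) = s *\<^sub>R x"
    using representative_eq_scaleR assms(1) nz(1) by blast
  moreover obtain t where t: "t \<in> F" "t \<noteq> 0"
    "(SOME v. v \<in> Fvec F \<and> v \<noteq> 0 \<and> pline F y = pline F v) = t *\<^sub>R y"
    using representative_eq_scaleR assms(2) nz(2) by blast
  ultimately have "pc F (Some (pline F x)) (Some (pline F y)) = Some (pline F ((s * t) *\<^sub>R (x \<times> y)))"
    unfolding pc_def proj_cross_def using P2 by (simp add: cross_mult_left cross_mult_right mult.commute)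
  also have "\<dots> = Some (pline F (x \<times> y))"
    using pline_scaleR[of "s * t"] s t mult_mem by simp
  finally show ?thesis .
qed

lemma pc_self: "pc F (Some A) (Some A) = None"
  by (simp add: pc_def proj_cross_def)

lemma pc_None: "pc F None X = None" "pc F X None = None"
  by (simp_all add: pc_def split: option.splits)

end

locale orth_basis_over_subfield = subfield_of_real +
  fixes v1 v2 v3 :: "real^3"
  assumes orth_basis: "orth_basis F v1 v2 v3"
begin

definition comb :: "real \<Rightarrow> real \<Rightarrow> real \<Rightarrow> real^3" where
  "comb a b c = a *\<^sub>R v1 + b *\<^sub>R v2 + c *\<^sub>R v3"

lemma basis_mem_Fvec: "v1 \<in> Fvec F" "v2 \<in> Fvec F" "v3 \<in> Fvec F"
  using orth_basis unfolding orth_basis_def by auto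

lemma basis_orthogonal: "v1 \<bullet> v2 = 0" "v2 \<bullet> v3 = 0" "v1 \<bullet> v3 = 0"
  "v2 \<bullet> v1 = 0" "v3 \<bullet> v2 = 0" "v3 \<bullet> v1 = 0"
  using orth_basis unfolding orth_basis_def by (auto simp: inner_commute)

lemma Fvec_eq_comb:
  assumes "x \<in> Fvec F" obtains a b c where "a \<in> F" "b \<in> F" "c \<in> F" "x = comb a b c"
  using orth_basis assms that unfolding orth_basis_def comb_def by (metis (no_types, lifting) ex1E)

lemma basis_nonzero: "v1 \<noteq> 0" "v2 \<noteq> 0" "v3 \<noteq> 0"
proof -
  have "0 \<in> Fvec F" using zero_mem by (simp add: Fvec_def)
  then obtain abc where unique: "\<And>y. fst y \<in> F \<and> fst (snd y) \<in> F \<and> snd (snd y) \<in> F \<and>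
      0 = fst y *\<^sub>R v1 + fst (snd y) *\<^sub>R v2 + snd (snd y) *\<^sub>R v3 \<Longrightarrow> y = abc"
    using orth_basis unfolding orth_basis_def by metis
  have "(0, 0, 0) = abc" using unique[of "(0, 0, 0)"] zero_mem by simp
  moreover have "(1, 0, 0) = abc" if "v1 = 0" using unique[of "(1, 0, 0)"] that field_mems by simp
  moreover have "(0, 1, 0) = abc" if "v2 = 0" using unique[of "(0, 1, 0)"] that field_mems by simp
  moreover have "(0, 0, 1) = abc" if "v3 = 0" using unique[of "(0, 0, 1)"] that field_mems by simp
  ultimately show "v1 \<noteq> 0" "v2 \<noteq> 0" "v3 \<noteq> 0" by auto
qed

lemma inner_comb: "comb a b c \<bullet> v1 = a * (v1 \<bullet> v1)" "comb a b c \<bullet> v2 = b * (v2 \<bullet> v2)"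
  "comb a b c \<bullet> v3 = c * (v3 \<bullet> v3)"
  by (simp_all add: comb_def inner_add_left basis_orthogonal)

lemma comb_eq_iff: "comb a b c = comb a' b' c' \<longleftrightarrow> a = a' \<and> b = b' \<and> c = c'"
proof
  assume "comb a b c = comb a' b' c'"
  then show "a = a' \<and> b = b' \<and> c = c'"
    using inner_comb[of a b c] inner_comb[of a' b' c'] basis_nonzero by auto
qed simp

lemma comb_eq_0_iff: "comb a b c = 0 \<longleftrightarrow> a = 0 \<and> b = 0 \<and> c = 0"
  using comb_eq_iff[of a b c 0 0 0] by (simp add: comb_def)

lemma scaleR_comb: "t *\<^sub>R comb a b c = comb (t * a) (t * b) (t * c)"
  by (simp add: comb_def algebra_simps)

lemma comb_mem_Fvec: "a \<in> F \<Longrightarrow> b \<in> F \<Longrightarrow> c \<in> F \<Longrightarrow> comb a b c \<in> Fvec F"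
  using basis_mem_Fvec unfolding Fvec_def comb_def by (auto intro!: field_mems)

lemma comb_coordinates:
  assumes "x \<in> Fvec F"
  shows "x = comb ((x \<bullet> v1) / (v1 \<bullet> v1)) ((x \<bullet> v2) / (v2 \<bullet> v2)) ((x \<bullet> v3) / (v3 \<bullet> v3))"
proof -
  obtain a b c where "x = comb a b c" using Fvec_eq_comb assms by blast
  then show ?thesis using basis_nonzero by (simp add: inner_comb)
qed

definition triple :: real where "triple = v1 \<bullet> (v2 \<times> v3)"

definition k1 :: real where "k1 = triple / (v1 \<bullet> v1)"
definition k2 :: real where "k2 = triple / (v2 \<bullet> v2)"
definition k3 :: real where "k3 = triple / (v3 \<bullet> v3)"

lemma cross3_basis: "v2 \<times> v3 = k1 *\<^sub>R v1" "v3 \<times> v1 = k2 *\<^sub>R v2" "v1 \<times> v2 = k3 *\<^sub>R v3"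
proof -
  have cyclic: "(v2 \<times> v3) \<bullet> v1 = triple" "(v3 \<times> v1) \<bullet> v2 = triple" "(v1 \<times> v2) \<bullet> v3 = triple"
    unfolding triple_def by (simp_all add: cross3_simps)
  show "v2 \<times> v3 = k1 *\<^sub>R v1" "v3 \<times> v1 = k2 *\<^sub>R v2" "v1 \<times> v2 = k3 *\<^sub>R v3"
    using comb_coordinates[OF cross3_mem_Fvec[OF basis_mem_Fvec(2,3)]]
      comb_coordinates[OF cross3_mem_Fvec[OF basis_mem_Fvec(3,1)]]
      comb_coordinates[OF cross3_mem_Fvec[OF basis_mem_Fvec(1,2)]]
    by (simp_all add: cyclic dot_cross_self k1_def k2_def k3_def comb_def)
qed

lemma k_mem: "k1 \<in> F" "k2 \<in> F" "k3 \<in> F"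
  using scaleR_factor_mem cross3_mem_Fvec basis_mem_Fvec basis_nonzero cross3_basis by metis+

lemma k_nonzero: "k1 \<noteq> 0" "k2 \<noteq> 0" "k3 \<noteq> 0"
  using norm_and_cross_eq_0 basis_orthogonal basis_nonzero cross3_basis by (metis scale_zero_left)+


lemma cross3_comb:
  "comb a b c \<times> comb a' b' c' =
     comb ((b * c' - c * b') * k1) ((c * a' - a * c') * k2) ((a * b' - b * a') * k3)"
proof -
  have skew: "v3 \<times> v2 = - (k1 *\<^sub>R v1)" "v1 \<times> v3 = - (k2 *\<^sub>R v2)" "v2 \<times> v1 = - (k3 *\<^sub>R v3)"
    using cross3_basis cross_skew by metis+
  show ?thesis
    unfolding comb_def
    by (simp add: cross_add_left cross_add_right cross_mult_left cross_mult_right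
        cross3_basis skew algebra_simps)
qed

lemma pc_comb:
  assumes "a \<in> F" "b \<in> F" "c \<in> F" "a' \<in> F" "b' \<in> F" "c' \<in> F"
    and "\<not> (b * c' - c * b' = 0 \<and> c * a' - a * c' = 0 \<and> a * b' - b * a' = 0)"
  shows "pc F (Some (pline F (comb a b c))) (Some (pline F (comb a' b' c'))) =
     Some (pline F (comb ((b * c' - c * b') * k1) ((c * a' - a * c') * k2) ((a * b' - b * a') * k3)))"
  using assms pc_pline[of "comb a b c" "comb a' b' c'"]
  by (simp add: comb_mem_Fvec cross3_comb comb_eq_0_iff k_nonzero)

lemma pline_comb_eq:
  assumes "t \<in> F" "t \<noteq> 0" "a = t * a'" "b = t * b'" "c = t * c'"
  shows "pline F (comb a b c) = pline F (comb a' b' c')"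
  using pline_scaleR[OF assms(1,2), of "comb a' b' c'"] assms(3-5) by (simp add: scaleR_comb)

lemma pline_comb_eqD:
  assumes "pline F (comb a b c) = pline F (comb a' b' c')"
  obtains t where "a = t * a'" "b = t * b'" "c = t * c'"
  using pline_eq_imp_scaleR[OF assms] that by (auto simp: scaleR_comb comb_eq_iff)

text \<open>Since comb depends on v1, v2, v3, the equation v1 = comb 1 0 0 would loop as a
  rewrite rule; the basis vectors are therefore rewritten only inside pline.\<close>
lemma pline_basis_eq_comb:
  "pline F v1 = pline F (comb 1 0 0)" "pline F v2 = pline F (comb 0 1 0)" "pline F v3 = pline F (comb 0 0 1)"
  by (simp_all add: comb_def)

lemma basis_combinations_eq_comb:
  "v1 - r *\<^sub>R v2 = comb 1 (- r) 0" "v3 - r *\<^sub>R v2 = comb 0 (- r) 1" "v1 - r *\<^sub>R v3 = comb 1 0 (- r)"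
  "v1 - v2 = comb 1 (- 1) 0" "v2 - v3 = comb 0 1 (- 1)" "v1 - v3 = comb 1 0 (- 1)"
  "comb a b c + s *\<^sub>R v3 = comb a b (c + s)"
  by (simp_all add: comb_def algebra_simps)

lemmas coordinate_simps = pline_basis_eq_comb basis_combinations_eq_comb field_mems k_mem k_nonzero

lemma pc_v1_v2: "pc F (Some (pline F v1)) (Some (pline F v2)) = Some (pline F v3)"
  by (simp add: coordinate_simps pc_comb)
    (rule pline_comb_eq[where t = k3]; simp add: coordinate_simps)

lemma pc_v2_v3: "pc F (Some (pline F v2)) (Some (pline F v3)) = Some (pline F v1)"
  by (simp add: coordinate_simps pc_comb)
    (rule pline_comb_eq[where t = k1]; simp add: coordinate_simps)

lemma pc_v3_v1: "pc F (Some (pline F v3)) (Some (pline F v1)) = Some (pline F v2)"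
  by (simp add: coordinate_simps pc_comb)
    (rule pline_comb_eq[where t = k2]; simp add: coordinate_simps)

lemma pc_identity_a:
  assumes "r \<in> F" "s \<in> F"
  shows "pc F (Some (pline F v3)) (pc F (Some (pline F (v3 - r *\<^sub>R v2))) (Some (pline F (v1 - s *\<^sub>R v3))))
    = Some (pline F (v1 - (r * s) *\<^sub>R v2))"
  using assms by (simp add: coordinate_simps pc_comb)
    (rule pline_comb_eq[where t = "- k1 * k2"]; simp add: coordinate_simps)

lemma pc_identity_b:
  assumes "s \<in> F"
  shows "pc F (Some (pline F v2)) (pc F (Some (pline F (v2 - v3))) (Some (pline F (v1 - s *\<^sub>R v2))))
    = Some (pline F (v1 - s *\<^sub>R v3))"
  using assms by (simp add: coordinate_simps pc_comb)
    (rule pline_comb_eq[where t = "- k1 * k3"]; simp add: coordinate_simps)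

lemma pc_identity_c:
  assumes "r \<in> F"
  shows "pc F (Some (pline F v1)) (pc F (Some (pline F (v1 - v3))) (Some (pline F (v1 - r *\<^sub>R v2))))
    = Some (pline F (v3 - r *\<^sub>R v2))"
  using assms by (simp add: coordinate_simps pc_comb)
    (rule pline_comb_eq[where t = "- k2 * k3"]; simp add: coordinate_simps)

lemma pc_identity_d:
  assumes "r \<in> F" "s \<in> F"
  shows "pc F (Some (pline F v3))
      (pc F (pc F (pc F (Some (pline F (v2 - v3))) (Some (pline F (v1 - r *\<^sub>R v2))))
                  (pc F (Some (pline F v2)) (Some (pline F (v1 - s *\<^sub>R v3)))))
            (Some (pline F v3)))
    = Some (pline F (v1 - (r - s) *\<^sub>R v2))"
  using assms by (simp add: coordinate_simps pc_comb)
    (rule pline_comb_eq[where t = "k1 * k1 * k2 * k2 * k3"]; simp add: coordinate_simps algebra_simps)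

lemma pc_identity_e:
  "pc F (Some (pline F v2)) (pc F (Some (pline F (v1 - v2))) (Some (pline F (v2 - v3))))
    = Some (pline F (v1 - v3))"
  by (simp add: coordinate_simps pc_comb)
    (rule pline_comb_eq[where t = "k1 * k3"]; simp add: coordinate_simps)

definition iota :: "(real^3) set \<Rightarrow> (real^3) set option" where
  "iota W = pc F (pc F (Some W) (Some (pline F v3)))
     (pc F (pc F (pc F (Some W) (Some (pline F v3))) (Some (pline F v3))) (Some (pline F v2)))"

lemma iota_comb:
  assumes "a \<in> F" "b \<in> F" "c \<in> F" "a \<noteq> 0"
  shows "iota (pline F (comb a b c)) = Some (pline F (comb a b 0))"
  using assms unfolding iota_def by (simp add: coordinate_simps pc_comb)
    (rule pline_comb_eq[where t = "a * k1 * k1 * k2 * k2 * k3"]; simp add: coordinate_simps)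

lemma iota_comb_undefined:
  assumes "b \<in> F" "c \<in> F" "\<not> (b = 0 \<and> c = 0)"
  shows "iota (pline F (comb 0 b c)) = None"
proof (cases "b = 0")
  case True
  then have "pline F (comb 0 b c) = pline F v3"
    unfolding pline_basis_eq_comb using assms by (intro pline_comb_eq[where t = c]) simp_all
  then show ?thesis by (simp add: iota_def pc_self pc_None)
next
  case False
  have "pline F (comb 0 (- (b * k1 * k2)) 0) = pline F v2"
    unfolding pline_basis_eq_comb using assms False
    by (intro pline_comb_eq[where t = "- (b * k1 * k2)"]) (simp_all add: coordinate_simps)
  then show ?thesis using assms False
    by (simp add: iota_def coordinate_simps pc_comb pc_self pc_None)
qed

lemma pline_eq_affine_chart_iff:
  assumes "a \<in> F" "b \<in> F" "c \<in> F" "\<not> (a = 0 \<and> b = 0 \<and> c = 0)" "r \<in> F"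
  shows "(\<exists>s\<in>F. pline F (comb a b c) = pline F (comb 1 (- r) s)) \<longleftrightarrow> a \<noteq> 0 \<and> b = - r * a"
proof
  assume "\<exists>s\<in>F. pline F (comb a b c) = pline F (comb 1 (- r) s)"
  then obtain s t where "a = t" "b = t * - r" "c = t * s"
    by (metis pline_comb_eqD mult_1_right)
  then show "a \<noteq> 0 \<and> b = - r * a" using assms(4) by auto
next
  assume "a \<noteq> 0 \<and> b = - r * a"
  then have "pline F (comb a b c) = pline F (comb 1 (- r) (c / a))"
    using assms by (intro pline_comb_eq[where t = a]) auto
  then show "\<exists>s\<in>F. pline F (comb a b c) = pline F (comb 1 (- r) s)"
    using assms divide_mem by blast
qed

lemma iota_defined_iff:
  assumes "W \<in> P2 F"
  shows "iota W \<noteq> None \<longleftrightarrow> (\<exists>!r. r \<in> F \<and> (\<exists>s\<in>F. W = pline F (v1 - r *\<^sub>R v2 + s *\<^sub>R v3)))"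
proof -
  obtain x where "x \<in> Fvec F" "x \<noteq> 0" "W = pline F x" using assms unfolding P2_def by blast
  then obtain a b c where abc: "a \<in> F" "b \<in> F" "c \<in> F" "\<not> (a = 0 \<and> b = 0 \<and> c = 0)"
    and W: "W = pline F (comb a b c)"
    using Fvec_eq_comb comb_eq_0_iff by metis
  have chart: "r \<in> F \<and> (\<exists>s\<in>F. W = pline F (v1 - r *\<^sub>R v2 + s *\<^sub>R v3)) \<longleftrightarrow>
      r \<in> F \<and> a \<noteq> 0 \<and> b = - r * a" for r
    using pline_eq_affine_chart_iff[OF abc] unfolding W basis_combinations_eq_comb add_0_left by blast
  show ?thesis
  proof (cases "a = 0")
    case True
    then have "iota W = None" using iota_comb_undefined abc W by simp
    moreover have "\<nexists>r. r \<in> F \<and> (\<exists>s\<in>F. W = pline F (v1 - r *\<^sub>R v2 + s *\<^sub>R v3))"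
      using chart True by blast
    ultimately show ?thesis by blast
  next
    case False
    have "b = - r * a \<longleftrightarrow> r = - (b / a)" for r
      using False by (auto simp: field_simps)
    moreover have "- (b / a) \<in> F" using abc divide_mem uminus_mem by blast
    ultimately have "r \<in> F \<and> a \<noteq> 0 \<and> b = - r * a \<longleftrightarrow> r = - (b / a)" for r
      using False by blast
    then show ?thesis using chart iota_comb abc W False by simp
  qed
qed

lemma iota_affine_chart:
  assumes "r \<in> F" "s \<in> F"
  shows "iota (pline F (v1 - r *\<^sub>R v2 + s *\<^sub>R v3)) = Some (pline F (v1 - r *\<^sub>R v2))"
  using assms iota_comb[of 1 "- r" s] by (simp add: coordinate_simps)

end

theorem lemma8:
  fixes F :: "real set" and v1 v2 v3 :: "real^3"
  assumes hF: "is_subfield_of_real F"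
    and hB: "orth_basis F v1 v2 v3"
  defines "V1 \<equiv> pline F v1" and "V2 \<equiv> pline F v2" and "V3 \<equiv> pline F v3"
    and "V12 \<equiv> pline F (v1 - v2)" and "V23 \<equiv> pline F (v2 - v3)"
    and "V13 \<equiv> pline F (v1 - v3)"
  shows "(pc F (Some V1) (Some V2) = Some V3)
    \<and> (pc F (Some V2) (Some V3) = Some V1)
    \<and> (pc F (Some V3) (Some V1) = Some V2)
    \<and> (\<forall>r\<in>F. \<forall>s\<in>F.
      Some (pline F (v1 - (r * s) *\<^sub>R v2)) =
        pc F (Some V3) (pc F (Some (pline F (v3 - r *\<^sub>R v2))) (Some (pline F (v1 - s *\<^sub>R v3)))))
    \<and> (\<forall>s\<in>F.
      Some (pline F (v1 - s *\<^sub>R v3)) =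
        pc F (Some V2) (pc F (Some V23) (Some (pline F (v1 - s *\<^sub>R v2)))))
    \<and> (\<forall>r\<in>F.
      Some (pline F (v3 - r *\<^sub>R v2)) =
        pc F (Some V1) (pc F (Some V13) (Some (pline F (v1 - r *\<^sub>R v2)))))
    \<and> (\<forall>r\<in>F. \<forall>s\<in>F.
      Some (pline F (v1 - (r - s) *\<^sub>R v2)) =
        pc F (Some V3)
          (pc F (pc F (pc F (Some V23) (Some (pline F (v1 - r *\<^sub>R v2))))
                      (pc F (Some V2) (Some (pline F (v1 - s *\<^sub>R v3)))))
                (Some V3)))
    \<and> (Some V13 = pc F (Some V2) (pc F (Some V12) (Some V23)))
    \<and> (\<forall>W\<in>P2 F.
      (let iota = pc F (pc F (Some W) (Some V3))
                       (pc F (pc F (pc F (Some W) (Some V3)) (Some V3)) (Some V2))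
       in (iota \<noteq> None \<longleftrightarrow>
             (\<exists>!r. r \<in> F \<and> (\<exists>s\<in>F. W = pline F (v1 - r *\<^sub>R v2 + s *\<^sub>R v3)))) \<and>
          (\<forall>r\<in>F. \<forall>s\<in>F. W = pline F (v1 - r *\<^sub>R v2 + s *\<^sub>R v3) \<longrightarrow>
             iota = Some (pline F (v1 - r *\<^sub>R v2))) \<and>
          (\<forall>r\<in>F. W = pline F (v1 - r *\<^sub>R v2) \<longrightarrow> iota = Some W)))"
proof -
  interpret orth_basis_over_subfield F v1 v2 v3 using hF hB by unfold_locales
  show ?thesis
    unfolding V1_def V2_def V3_def V12_def V23_def V13_def Let_def iota_def[symmetric]
    using pc_v1_v2 pc_v2_v3 pc_v3_v1 pc_identity_a pc_identity_b pc_identity_c pc_identity_d pc_identity_e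
      iota_defined_iff iota_affine_chart iota_affine_chart[where s = 0] zero_mem
    by simp
qed

end
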